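(* Let $n \geq 1$ and $0 < k < n$ be integers, and let $M$ be an invertible $n \times n$ matrix over the field $\mathbb{F}_2 = \{0,1\}$, acting on column vectors $x \in \mathbb{F}_2^n$ (binary strings of length $n$) by matrix multiplication with arithmetic modulo $2$. Let $S_k \subseteq \mathbb{F}_2^n$ be the set of binary strings of length $n$ with Hamming weight exactly $k$. Then there do not exist two distinct positions $i \neq j$ in $\{1,\dots,n\}$ such that the $i$-th digit of $Mx$ is the same for all $x \in S_k$ and the $j$-th digit of $Mx$ is the same for all $x \in S_k$.
   Context: $\mathrm{GL}_n(\mathbb{F}_2)$ denotes the group of invertible $n\times n$ matrices over the two-element field; it is isomorphic to the group of $n$-qubit permutation unitaries generated by CNOT gates, acting on computational basis strings. *)

theory Defs
  imports "HOL-Analysis.Analysis" "HOL-Library.Z2"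
begin

definition hamming_weight :: "bit ^ 'n \<Rightarrow> nat" where
  "hamming_weight x = card {i. x $ i = 1}"

definition weight_slice :: "nat \<Rightarrow> (bit ^ 'n) set" where
  "weight_slice k = {x. hamming_weight x = k}"

end

theory Submission
  imports Defs
begin

text \<open>If row i of M is constant on the weight-k slice with 0 < k < n, then exchanging a single
  coordinate a for b in a weight-k string shows M i a = M i b, so the row is constant. Over F_2 a
  constant row is either zero or all ones; an invertible matrix has no zero row and no two equal
  rows, so at most one row of M can be constant on the slice.\<close>

definition indicator_vector :: "'n set \<Rightarrow> 'a::zero_neq_one ^ 'n" where
  "indicator_vector S = (\<chi> m. if m \<in> S then 1 else 0)"

lemma hamming_weight_indicator_vector: "hamming_weight (indicator_vector S) = card S"
  unfolding hamming_weight_def indicator_vector_def by simp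

lemma matrix_vector_mult_indicator_vector:
  fixes M :: "'a::semiring_1 ^ 'n ^ 'm"
  shows "(M *v indicator_vector S) $ i = (\<Sum>m\<in>S. M $ i $ m)"
proof -
  have "(M *v indicator_vector S) $ i = (\<Sum>m\<in>UNIV. if m \<in> S then M $ i $ m else 0)"
    unfolding indicator_vector_def matrix_vector_mult_def by (simp add: if_distrib cong: if_cong)
  also have "\<dots> = (\<Sum>m\<in>S. M $ i $ m)"
    by (simp add: sum.If_cases)
  finally show ?thesis .
qed

lemma row_constant_if_constant_on_weight_slice:
  fixes M :: "bit ^ 'n ^ 'm"
  assumes k: "0 < k" "k < CARD('n)"
    and const: "\<forall>x\<in>weight_slice k. (M *v x) $ i = c"
  shows "row i M = vec (M $ i $ a)"
proof -
  have "M $ i $ b = M $ i $ a" for b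
  proof (cases "a = b")
    case False
    have "k - 1 \<le> card (UNIV - {a, b})"
      using k False by (simp add: card_Diff_subset)
    then obtain T where T: "T \<subseteq> UNIV - {a, b}" "card T = k - 1"
      by (meson obtain_subset_with_card_n)
    have sum_eq_c: "(\<Sum>m\<in>insert e T. M $ i $ m) = c" if "e \<notin> T" for e
    proof -
      have "indicator_vector (insert e T) \<in> weight_slice k"
        using that T k by (simp add: weight_slice_def hamming_weight_indicator_vector)
      then show ?thesis
        using const by (metis matrix_vector_mult_indicator_vector)
    qed
    have "M $ i $ b + (\<Sum>m\<in>T. M $ i $ m) = M $ i $ a + (\<Sum>m\<in>T. M $ i $ m)"
      using sum_eq_c[of a] sum_eq_c[of b] T(1) by (metis Diff_iff insertCI subsetD finite sum.insert)
    then show ?thesis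
      by (rule add_right_imp_eq)
  qed simp
  then show ?thesis
    by (simp add: row_def vec_eq_iff)
qed

lemma det_eq_0_if_two_constant_rows:
  fixes A :: "bit ^ 'n ^ 'n"
  assumes "i \<noteq> j" and "row i A = vec e" and "row j A = vec f"
  shows "det A = 0"
proof (cases "e = 0 \<or> f = 0")
  case True
  then show ?thesis
    using assms det_zero_row(2) by (metis vec_0)
next
  case False
  then have "row i A = row j A"
    using assms by simp
  with \<open>i \<noteq> j\<close> show ?thesis
    by (rule det_identical_rows)
qed

theorem theorem1:
  fixes M :: "bit ^ 'n ^ 'n" and k :: nat
  assumes "invertible M"
    and "0 < k" and "k < CARD('n)"
  shows "\<not> (\<exists>i j. i \<noteq> j
            \<and> (\<exists>c. \<forall>x\<in>weight_slice k. (M *v x) $ i = c)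
            \<and> (\<exists>d. \<forall>x\<in>weight_slice k. (M *v x) $ j = d))"
proof
  assume "\<exists>i j. i \<noteq> j
            \<and> (\<exists>c. \<forall>x\<in>weight_slice k. (M *v x) $ i = c)
            \<and> (\<exists>d. \<forall>x\<in>weight_slice k. (M *v x) $ j = d)"
  then obtain i j c d where "i \<noteq> j"
    and "\<forall>x\<in>weight_slice k. (M *v x) $ i = c"
    and "\<forall>x\<in>weight_slice k. (M *v x) $ j = d"
    by blast
  then have "det M = 0"
    using assms(2,3) by (metis det_eq_0_if_two_constant_rows row_constant_if_constant_on_weight_slice)
  with \<open>invertible M\<close> show False
    by (simp add: invertible_det_nz)
qed

end
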